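(* Let $G$ be a complete edge-colored graph such that the quotient graph $G[M]/\mathbb{P}_{\max}(M)$ of each strong prime module $M$ of $G$ is a complete edge-colored permutation graph. Then $G$ is a complete edge-colored permutation graph.
   Context: A complete $k$-edge-colored graph $G=(V,E_1,\dots,E_k)$ is the complete graph on a finite set $V$ with edges partitioned into $k$ nonempty color classes $E_i$ (the one-vertex graph also counts); $G_{|i}=(V,E_i)$. A labeling is a bijection $\ell:V\to\{1,\dots,|V|\}$. A graph $(V,E)$ with labeling $\ell$ is a simple permutation graph of a permutation $\pi$ if for all $u,v$ with $\ell(u)>\ell(v)$: $\{u,v\}\in E$ iff $\pi^{-1}(\ell(u))<\pi^{-1}(\ell(v))$. $G$ is a complete edge-colored permutation graph if there exist a labeling $\ell$ and permutations $\pi_1,\dots,\pi_k$ with $(G_{|i},\ell)$ a simple permutation graph of $\pi_i$ for all $i$. A module is a set $M\subseteq V$ such that for every $v\notin M$ all edges $\{u,v\}$, $u\in M$, have the same color; a strong module is a nonempty module comparable by inclusion or disjoint with every other module. For a strong module $M$ with $|M|\ge2$, $\mathbb{P}_{\max}(M)$ is the set of inclusion-maximal strong modules properly contained in $M$, and $G[M]/\mathbb{P}_{\max}(M)$ is the complete graph on $\mathbb{P}_{\max}(M)$ with $\{M_a,M_b\}$ colored by the common color of all edges between $M_a$ and $M_b$; for $|M|=1$ it is the one-vertex graph. A strong module is series if its quotient graph has at least two vertices and all its edges have one color, and prime otherwise. *)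

theory Defs
  imports Main
begin

text \<open>A complete edge-colored graph is given by a finite nonempty vertex set V and a
  symmetric colouring col of the pairs of distinct vertices; the colour classes are the
  (nonempty) fibres of col over the colours that actually occur.\<close>

definition ceg :: "'a set \<Rightarrow> ('a \<Rightarrow> 'a \<Rightarrow> 'c) \<Rightarrow> bool" where
  "ceg V col \<longleftrightarrow> finite V \<and> V \<noteq> {} \<and>
     (\<forall>u\<in>V. \<forall>v\<in>V. u \<noteq> v \<longrightarrow> col u v = col v u)"

definition colors :: "'a set \<Rightarrow> ('a \<Rightarrow> 'a \<Rightarrow> 'c) \<Rightarrow> 'c set" where
  "colors V col = {col u v | u v. u \<in> V \<and> v \<in> V \<and> u \<noteq> v}"

definition is_labeling :: "'a set \<Rightarrow> ('a \<Rightarrow> nat) \<Rightarrow> bool" where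
  "is_labeling V l \<longleftrightarrow> bij_betw l V {1..card V}"

definition simple_perm_graph ::
  "'a set \<Rightarrow> ('a \<Rightarrow> 'a \<Rightarrow> bool) \<Rightarrow> ('a \<Rightarrow> nat) \<Rightarrow> (nat \<Rightarrow> nat) \<Rightarrow> bool" where
  "simple_perm_graph V E l \<pi> \<longleftrightarrow>
     bij_betw \<pi> {1..card V} {1..card V} \<and>
     (\<forall>u\<in>V. \<forall>v\<in>V. l u > l v \<longrightarrow>
        (E u v \<longleftrightarrow> inv_into {1..card V} \<pi> (l u) < inv_into {1..card V} \<pi> (l v)))"

definition cecpg :: "'a set \<Rightarrow> ('a \<Rightarrow> 'a \<Rightarrow> 'c) \<Rightarrow> bool" where
  "cecpg V col \<longleftrightarrow> (\<exists>l. is_labeling V l \<and>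
     (\<forall>c\<in>colors V col. \<exists>\<pi>. simple_perm_graph V (\<lambda>u v. col u v = c) l \<pi>))"

definition module :: "'a set \<Rightarrow> ('a \<Rightarrow> 'a \<Rightarrow> 'c) \<Rightarrow> 'a set \<Rightarrow> bool" where
  "module V col M \<longleftrightarrow> M \<subseteq> V \<and>
     (\<forall>v\<in>V - M. \<forall>u\<in>M. \<forall>u'\<in>M. col u v = col u' v)"

definition strong_module :: "'a set \<Rightarrow> ('a \<Rightarrow> 'a \<Rightarrow> 'c) \<Rightarrow> 'a set \<Rightarrow> bool" where
  "strong_module V col M \<longleftrightarrow> module V col M \<and> M \<noteq> {} \<and>
     (\<forall>M'. module V col M' \<longrightarrow> M \<subseteq> M' \<or> M' \<subseteq> M \<or> M \<inter> M' = {})"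

definition Pmax :: "'a set \<Rightarrow> ('a \<Rightarrow> 'a \<Rightarrow> 'c) \<Rightarrow> 'a set \<Rightarrow> 'a set set" where
  "Pmax V col M = {M'. strong_module V col M' \<and> M' \<subset> M \<and>
     (\<forall>M''. strong_module V col M'' \<and> M'' \<subset> M \<and> M' \<subseteq> M'' \<longrightarrow> M'' = M')}"

definition quot_vertices :: "'a set \<Rightarrow> ('a \<Rightarrow> 'a \<Rightarrow> 'c) \<Rightarrow> 'a set \<Rightarrow> 'a set set" where
  "quot_vertices V col M = (if card M \<ge> 2 then Pmax V col M else {M})"

text \<open>Colour of the quotient edge {A,B}: the common colour of the edges between A and B.\<close>
definition quot_col :: "('a \<Rightarrow> 'a \<Rightarrow> 'c) \<Rightarrow> 'a set \<Rightarrow> 'a set \<Rightarrow> 'c" where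
  "quot_col col A B = col (SOME a. a \<in> A) (SOME b. b \<in> B)"

definition series_module :: "'a set \<Rightarrow> ('a \<Rightarrow> 'a \<Rightarrow> 'c) \<Rightarrow> 'a set \<Rightarrow> bool" where
  "series_module V col M \<longleftrightarrow> strong_module V col M \<and>
     card (quot_vertices V col M) \<ge> 2 \<and>
     card (colors (quot_vertices V col M) (quot_col col)) = 1"

definition prime_module :: "'a set \<Rightarrow> ('a \<Rightarrow> 'a \<Rightarrow> 'c) \<Rightarrow> 'a set \<Rightarrow> bool" where
  "prime_module V col M \<longleftrightarrow> strong_module V col M \<and> \<not> series_module V col M"

end

theory Submission
  imports Defs "HOL-Library.Disjoint_Sets"
begin

text \<open>Induction along the modular decomposition. A strong module M with at least two
  vertices is partitioned by \<open>Pmax V col M\<close>, and every edge between two blocks has the colour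
  of the corresponding edge of the quotient. The quotient of a series module is monochromatic,
  hence trivially a permutation graph; for a prime module it is one by hypothesis. Given a
  labeling and permutations for the quotient and for each block (by induction), one obtains
  them for M lexicographically: a vertex is ordered first by its block, then within its block.
  This works for every colour simultaneously, because edges inside a block are governed by the
  block's data and edges between blocks by the quotient's.\<close>

text \<open>A relaxation of \<^const>\<open>cecpg\<close> that is closed under the lexicographic construction:
  \<open>l\<close> and each \<open>p c\<close> need only be injective into the naturals, and \<open>p c u\<close> plays the role of
  the position \<open>\<pi>\<^sub>c\<^sup>-\<^sup>1 (l u)\<close>; there is a permutation for every colour, occurring or not.\<close>

definition perm_realizer ::
  "'a set \<Rightarrow> ('a \<Rightarrow> 'a \<Rightarrow> 'c) \<Rightarrow> ('a \<Rightarrow> nat) \<Rightarrow> ('c \<Rightarrow> 'a \<Rightarrow> nat) \<Rightarrow> bool" where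
  "perm_realizer V col l p \<longleftrightarrow> inj_on l V \<and> (\<forall>c. inj_on (p c) V) \<and>
     (\<forall>c. \<forall>u\<in>V. \<forall>v\<in>V. l v < l u \<longrightarrow> (col u v = c \<longleftrightarrow> p c u < p c v))"

lemma exists_order_preserving_bij:
  fixes f :: "'a \<Rightarrow> 'b::linorder"
  assumes fin: "finite V" and inj: "inj_on f V"
  shows "\<exists>g. bij_betw g V {1..card V} \<and> (\<forall>u\<in>V. \<forall>v\<in>V. g u < g v \<longleftrightarrow> f u < f v)"
proof -
  define g where "g u = card {w\<in>V. f w \<le> f u}" for u
  have mono: "g u < g v" if "u \<in> V" "v \<in> V" "f u < f v" for u v
  proof -
    have "{w\<in>V. f w \<le> f u} \<subseteq> {w\<in>V. f w \<le> f v}"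
      and "v \<in> {w\<in>V. f w \<le> f v} - {w\<in>V. f w \<le> f u}" using that by auto
    then have "{w\<in>V. f w \<le> f u} \<subset> {w\<in>V. f w \<le> f v}" by blast
    then show ?thesis unfolding g_def using fin by (intro psubset_card_mono) auto
  qed
  have order: "g u < g v \<longleftrightarrow> f u < f v" if "u \<in> V" "v \<in> V" for u v
    using mono[OF that] mono[OF that(2,1)] inj_onD[OF inj _ that]
    by (cases "f u" "f v" rule: linorder_cases) auto
  have "inj_on g V"
  proof (rule inj_onI)
    fix u v assume "u \<in> V" "v \<in> V" "g u = g v"
    then have "f u = f v" using order by (metis less_irrefl linorder_neqE)
    then show "u = v" using inj \<open>u \<in> V\<close> \<open>v \<in> V\<close> by (simp add: inj_on_eq_iff)
  qed
  moreover have "g ` V \<subseteq> {1..card V}"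
  proof
    fix x assume "x \<in> g ` V"
    then obtain u where "u \<in> V" "x = g u" by blast
    moreover have "0 < g u" unfolding g_def using fin \<open>u \<in> V\<close> by (subst card_gt_0_iff) auto
    moreover have "g u \<le> card V" unfolding g_def using fin by (intro card_mono) auto
    ultimately show "x \<in> {1..card V}" by simp
  qed
  ultimately have "bij_betw g V {1..card V}"
    unfolding bij_betw_def by (simp add: card_image card_subset_eq)
  then show ?thesis using order by blast
qed

lemma perm_realizer_normalize:
  assumes fin: "finite V" and r: "perm_realizer V col l p"
  obtains l' p' where "perm_realizer V col l' p'" and "bij_betw l' V {1..card V}"
    and "\<And>c. bij_betw (p' c) V {1..card V}"
proof -
  obtain l' where l': "bij_betw l' V {1..card V}" "\<forall>u\<in>V. \<forall>v\<in>V. l' u < l' v \<longleftrightarrow> l u < l v"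
    using exists_order_preserving_bij[OF fin] r unfolding perm_realizer_def by blast
  have "\<forall>c. \<exists>g. bij_betw g V {1..card V} \<and> (\<forall>u\<in>V. \<forall>v\<in>V. g u < g v \<longleftrightarrow> p c u < p c v)"
    using exists_order_preserving_bij[OF fin] r unfolding perm_realizer_def by blast
  then obtain p' where p': "\<And>c. bij_betw (p' c) V {1..card V}"
    "\<And>c. \<forall>u\<in>V. \<forall>v\<in>V. p' c u < p' c v \<longleftrightarrow> p c u < p c v"
    by metis
  have "perm_realizer V col l' p'"
    using r l' p' bij_betw_imp_inj_on unfolding perm_realizer_def by metis
  with l' p' that show ?thesis by blast
qed

lemma cecpg_imp_perm_realizer:
  assumes "cecpg V col"
  shows "\<exists>l p. perm_realizer V col l p"
proof -
  obtain l where l: "bij_betw l V {1..card V}"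
    and "\<forall>c\<in>colors V col. \<exists>\<pi>. simple_perm_graph V (\<lambda>u v. col u v = c) l \<pi>"
    using assms unfolding cecpg_def is_labeling_def by blast
  then obtain \<pi> where \<pi>: "\<And>c. c \<in> colors V col \<Longrightarrow> simple_perm_graph V (\<lambda>u v. col u v = c) l (\<pi> c)"
    by metis
  define p where
    "p c = (if c \<in> colors V col then inv_into {1..card V} (\<pi> c) \<circ> l else l)" for c
  have inj_l: "inj_on l V" using l bij_betw_imp_inj_on by blast
  have "inj_on (p c) V" for c
  proof (cases "c \<in> colors V col")
    case True
    then have "bij_betw (\<pi> c) {1..card V} {1..card V}"
      using \<pi> unfolding simple_perm_graph_def by blast
    then have "inj_on (inv_into {1..card V} (\<pi> c)) (l ` V)"
      using l by (simp add: bij_betw_def inj_on_inv_into)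
    then show ?thesis using True inj_l unfolding p_def by (simp add: comp_inj_on)
  qed (simp add: p_def inj_l)
  moreover have "col u v = c \<longleftrightarrow> p c u < p c v" if "u \<in> V" "v \<in> V" "l v < l u" for c u v
  proof (cases "c \<in> colors V col")
    case True
    then show ?thesis using \<pi>[OF True] that unfolding simple_perm_graph_def p_def by auto
  next
    case False
    have "col u v \<in> colors V col" using that unfolding colors_def by fastforce
    then show ?thesis using False that unfolding p_def by auto
  qed
  ultimately show ?thesis using inj_l unfolding perm_realizer_def by blast
qed

lemma perm_realizer_imp_cecpg:
  assumes fin: "finite V" and "perm_realizer V col l\<^sub>0 p\<^sub>0"
  shows "cecpg V col"
proof -
  obtain l p where r: "perm_realizer V col l p" and l: "bij_betw l V {1..card V}"
    and p: "\<And>c. bij_betw (p c) V {1..card V}"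
    using perm_realizer_normalize[OF fin \<open>perm_realizer V col l\<^sub>0 p\<^sub>0\<close>] by blast
  have "\<exists>\<pi>. simple_perm_graph V (\<lambda>u v. col u v = c) l \<pi>" for c
  proof
    define \<pi> where "\<pi> = l \<circ> inv_into V (p c)"
    have \<pi>: "bij_betw \<pi> {1..card V} {1..card V}"
      unfolding \<pi>_def using bij_betw_inv_into[OF p] l by (rule bij_betw_trans)
    have "inv_into {1..card V} \<pi> (l u) = p c u" if "u \<in> V" for u
    proof (rule inv_into_f_eq)
      show "inj_on \<pi> {1..card V}" using \<pi> bij_betw_imp_inj_on by blast
      show "p c u \<in> {1..card V}" using p that bij_betwE by blast
      show "\<pi> (p c u) = l u"
        unfolding \<pi>_def by (simp add: inv_into_f_f[OF bij_betw_imp_inj_on[OF p] that])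
    qed
    with \<pi> r show "simple_perm_graph V (\<lambda>u v. col u v = c) l \<pi>"
      unfolding simple_perm_graph_def perm_realizer_def by simp
  qed
  with l show ?thesis unfolding cecpg_def is_labeling_def by blast
qed

lemma perm_realizer_monochromatic:
  assumes fin: "finite V" and mono: "colors V col \<subseteq> {c0}"
  shows "\<exists>l p. perm_realizer V col l p"
proof -
  obtain l :: "'a \<Rightarrow> nat" and n where l: "l ` V = {i. i < n}" "inj_on l V"
    using finite_imp_inj_to_nat_seg[OF fin] by blast
  define p where "p c = (if c = c0 then (\<lambda>u. n - l u) else l)" for c
  have below: "l u < n" if "u \<in> V" for u using l that by blast
  have "inj_on (\<lambda>u. n - l u) V"
    using l(2) below by (intro inj_onI) (metis diff_diff_cancel less_imp_le inj_onD)
  then have "inj_on (p c) V" for c using l(2) unfolding p_def by simp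
  moreover have "col u v = c \<longleftrightarrow> p c u < p c v" if "u \<in> V" "v \<in> V" "l v < l u" for c u v
  proof -
    have "col u v = c0" using mono that unfolding colors_def by blast
    then show ?thesis using below[of u] below[of v] that unfolding p_def by auto
  qed
  ultimately show ?thesis using l(2) unfolding perm_realizer_def by blast
qed

lemma mult_add_less_iff_lex:
  fixes x y a b K :: nat
  assumes "a < K" "b < K"
  shows "x * K + a < y * K + b \<longleftrightarrow> x < y \<or> (x = y \<and> a < b)"
proof
  assume less: "x * K + a < y * K + b"
  have "(x * K + a) div K \<le> (y * K + b) div K"
    using less by (intro div_le_mono) simp
  then have "x \<le> y" using assms by simp
  then show "x < y \<or> (x = y \<and> a < b)" using less by auto
next
  have "x * K + a < y * K + b" if "x < y"
  proof -
    have "x * K + a < Suc x * K" using assms by simp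
    also have "\<dots> \<le> y * K" using that by (intro mult_le_mono1) simp
    finally show ?thesis by simp
  qed
  then show "x < y \<or> (x = y \<and> a < b) \<Longrightarrow> x * K + a < y * K + b" by auto
qed

lemma mult_add_eq_iff_lex:
  fixes x y a b K :: nat
  assumes "a < K" "b < K"
  shows "x * K + a = y * K + b \<longleftrightarrow> x = y \<and> a = b"
  using mult_add_less_iff_lex[OF assms, of x y] mult_add_less_iff_lex[OF assms(2,1), of y x] by auto

definition block :: "'a set set \<Rightarrow> 'a \<Rightarrow> 'a set" where
  "block Q u = (THE A. A \<in> Q \<and> u \<in> A)"

lemma block_eq:
  assumes "partition_on M Q" and "A \<in> Q" and "u \<in> A"
  shows "block Q u = A"
  unfolding block_def
proof (rule the_equality)
  show "B = A" if "B \<in> Q \<and> u \<in> B" for B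
    using assms that partition_onD2[OF assms(1)] unfolding disjoint_def by blast
qed (use assms in blast)

lemma block_in:
  assumes "partition_on M Q" and "u \<in> M"
  shows "block Q u \<in> Q" and "u \<in> block Q u"
  using assms block_eq partition_onD1[OF assms(1)] by fastforce+

lemma inj_on_lex_block:
  fixes f :: "'a set \<Rightarrow> nat" and g :: "'a set \<Rightarrow> 'a \<Rightarrow> nat"
  assumes Q: "partition_on M Q" and f: "inj_on f Q"
    and g: "\<And>A. A \<in> Q \<Longrightarrow> inj_on (g A) A"
    and bound: "\<And>A u. A \<in> Q \<Longrightarrow> u \<in> A \<Longrightarrow> g A u < K"
  shows "inj_on (\<lambda>u. f (block Q u) * K + g (block Q u) u) M"
proof (rule inj_onI)
  fix u v assume "u \<in> M" "v \<in> M"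
    and eq: "f (block Q u) * K + g (block Q u) u = f (block Q v) * K + g (block Q v) v"
  then have u: "block Q u \<in> Q" "u \<in> block Q u" and v: "block Q v \<in> Q" "v \<in> block Q v"
    using block_in[OF Q] by auto
  have "f (block Q u) = f (block Q v)" and g_eq: "g (block Q u) u = g (block Q v) v"
    using eq mult_add_eq_iff_lex[OF bound[OF u] bound[OF v]] by blast+
  then have "block Q u = block Q v" using inj_onD[OF f _ u(1) v(1)] by blast
  then show "u = v" using g_eq g[OF u(1)] u(2) v(2) by (simp add: inj_on_eq_iff)
qed

lemma perm_realizer_lex_block:
  fixes K :: nat
  assumes Q: "partition_on M Q"
    and quot: "perm_realizer Q qc LQ PQ"
    and blocks: "\<And>A. A \<in> Q \<Longrightarrow> perm_realizer A col (LA A) (PA A)"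
    and bound: "\<And>A u c. A \<in> Q \<Longrightarrow> u \<in> A \<Longrightarrow> LA A u < K \<and> PA A c u < K"
    and between: "\<And>A B u v. A \<in> Q \<Longrightarrow> B \<in> Q \<Longrightarrow> A \<noteq> B \<Longrightarrow> u \<in> A \<Longrightarrow> v \<in> B \<Longrightarrow>
      col u v = qc A B"
  shows "perm_realizer M col (\<lambda>u. LQ (block Q u) * K + LA (block Q u) u)
    (\<lambda>c u. PQ c (block Q u) * K + PA (block Q u) c u)"
proof -
  have inj_quot: "inj_on LQ Q" "\<And>c. inj_on (PQ c) Q"
    and inj_blocks: "\<And>A. A \<in> Q \<Longrightarrow> inj_on (LA A) A" "\<And>A c. A \<in> Q \<Longrightarrow> inj_on (PA A c) A"
    using quot blocks unfolding perm_realizer_def by auto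
  have "col u v = c \<longleftrightarrow> PQ c A * K + PA A c u < PQ c B * K + PA B c v"
    if u: "A \<in> Q" "u \<in> A" and v: "B \<in> Q" "v \<in> B"
      and less: "LQ B * K + LA B v < LQ A * K + LA A u"
    for c u v A B
  proof -
    have L_lex: "LQ B * K + LA B v < LQ A * K + LA A u \<longleftrightarrow>
        LQ B < LQ A \<or> (LQ B = LQ A \<and> LA B v < LA A u)"
      and P_lex: "PQ c A * K + PA A c u < PQ c B * K + PA B c v \<longleftrightarrow>
        PQ c A < PQ c B \<or> (PQ c A = PQ c B \<and> PA A c u < PA B c v)"
      using bound[OF u] bound[OF v] by (simp_all add: mult_add_less_iff_lex)
    show ?thesis
    proof (cases "A = B")
      case True
      then have "LA A v < LA A u" using less L_lex by simp
      then have "col u v = c \<longleftrightarrow> PA A c u < PA A c v"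
        using blocks[OF u(1)] u v True unfolding perm_realizer_def by blast
      then show ?thesis using True P_lex by simp
    next
      case False
      have "LQ A \<noteq> LQ B" and PQ_ne: "PQ c A \<noteq> PQ c B"
        using False inj_onD[OF inj_quot(1) _ u(1) v(1)] inj_onD[OF inj_quot(2)[of c] _ u(1) v(1)]
        by blast+
      then have "LQ B < LQ A" using less L_lex by auto
      then have "qc A B = c \<longleftrightarrow> PQ c A < PQ c B"
        using quot u(1) v(1) unfolding perm_realizer_def by blast
      then show ?thesis using between[OF u(1) v(1) False u(2) v(2)] PQ_ne P_lex by auto
    qed
  qed
  moreover have "inj_on (\<lambda>u. LQ (block Q u) * K + LA (block Q u) u) M"
    by (rule inj_on_lex_block[OF Q inj_quot(1) inj_blocks(1)]) (use bound in blast)+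
  moreover have "inj_on (\<lambda>u. PQ c (block Q u) * K + PA (block Q u) c u) M" for c
    by (rule inj_on_lex_block[OF Q inj_quot(2) inj_blocks(2)]) (use bound in blast)+
  ultimately show ?thesis
    unfolding perm_realizer_def using block_in[OF Q] by simp
qed

lemma perm_realizer_substitute:
  assumes Q: "partition_on M Q" and fin: "finite M"
    and quot: "perm_realizer Q qc LQ PQ"
    and blocks: "\<And>A. A \<in> Q \<Longrightarrow> \<exists>l p. perm_realizer A col l p"
    and between: "\<And>A B u v. A \<in> Q \<Longrightarrow> B \<in> Q \<Longrightarrow> A \<noteq> B \<Longrightarrow> u \<in> A \<Longrightarrow> v \<in> B \<Longrightarrow>
      col u v = qc A B"
  shows "\<exists>l p. perm_realizer M col l p"
proof -
  have "\<exists>l p. perm_realizer A col l p \<and>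
      (\<forall>u\<in>A. \<forall>c. l u < Suc (card M) \<and> p c u < Suc (card M))"
    if A: "A \<in> Q" for A
  proof -
    have "A \<subseteq> M" using Q A partition_onD1 by blast
    then have "finite A" and "card A \<le> card M" using fin by (auto intro: finite_subset card_mono)
    then obtain l p where "perm_realizer A col l p" and l: "bij_betw l A {1..card A}"
      and p: "\<And>c. bij_betw (p c) A {1..card A}"
      using perm_realizer_normalize blocks[OF A] by metis
    moreover have "l u < Suc (card M) \<and> p c u < Suc (card M)" if "u \<in> A" for u c
      using bij_betw_apply[OF l that] bij_betw_apply[OF p[of c] that] \<open>card A \<le> card M\<close> by simp
    ultimately show ?thesis by blast
  qed
  then obtain LA PA where LA: "\<And>A. A \<in> Q \<Longrightarrow> perm_realizer A col (LA A) (PA A)"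
    and bound: "\<And>A u c. A \<in> Q \<Longrightarrow> u \<in> A \<Longrightarrow> LA A u < Suc (card M) \<and> PA A c u < Suc (card M)"
    by metis
  show ?thesis using perm_realizer_lex_block[OF Q quot LA bound between] by blast
qed

lemma strong_module_singleton: "x \<in> V \<Longrightarrow> strong_module V col {x}"
  unfolding strong_module_def module_def by auto

lemma Pmax_cover:
  assumes fin: "finite V" and M: "strong_module V col M" and two: "2 \<le> card M" and x: "x \<in> M"
  shows "\<exists>A\<in>Pmax V col M. x \<in> A"
proof -
  define S where "S = {A. strong_module V col A \<and> A \<subset> M \<and> x \<in> A}"
  have "M \<subseteq> V" using M unfolding strong_module_def module_def by blast
  then have "finite S" unfolding S_def using fin by (auto intro: finite_subset[of _ "Pow V"])
  moreover have "M \<noteq> {x}" using two by auto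
  then have "{x} \<subset> M" using x by blast
  then have "{x} \<in> S" unfolding S_def using \<open>M \<subseteq> V\<close> x by (auto intro: strong_module_singleton)
  ultimately obtain A where "A \<in> S" and "\<And>B. B \<in> S \<Longrightarrow> A \<subseteq> B \<Longrightarrow> B = A"
    using finite_has_maximal2 by metis
  then have "A \<in> Pmax V col M" unfolding Pmax_def S_def by auto
  with \<open>A \<in> S\<close> show ?thesis unfolding S_def by blast
qed

lemma Pmax_disjoint:
  assumes A: "A \<in> Pmax V col M" and B: "B \<in> Pmax V col M" and "A \<inter> B \<noteq> {}"
  shows "A = B"
proof -
  have "A \<subseteq> B \<or> B \<subseteq> A"
    using A B \<open>A \<inter> B \<noteq> {}\<close> unfolding Pmax_def strong_module_def by blast
  then show ?thesis using A B unfolding Pmax_def by blast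
qed

lemma partition_on_Pmax:
  assumes "finite V" and "strong_module V col M" and "2 \<le> card M"
  shows "partition_on M (Pmax V col M)"
proof (rule partition_onI)
  show "\<Union> (Pmax V col M) = M"
    using Pmax_cover[OF assms] unfolding Pmax_def by blast
  show "disjnt A B" if "A \<in> Pmax V col M" "B \<in> Pmax V col M" "A \<noteq> B" for A B
    using Pmax_disjoint that unfolding disjnt_def by blast
  show "{} \<notin> Pmax V col M" unfolding Pmax_def strong_module_def by blast
qed

lemma module_col_eq_quot_col:
  assumes "ceg V col" and A: "module V col A" and B: "module V col B"
    and "A \<inter> B = {}" and "u \<in> A" and "v \<in> B"
  shows "col u v = quot_col col A B"
proof -
  define a b where "a = (SOME a. a \<in> A)" and "b = (SOME b. b \<in> B)"
  have "a \<in> A" "b \<in> B" unfolding a_def b_def using \<open>u \<in> A\<close> \<open>v \<in> B\<close> by (auto intro: someI)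
  have "A \<subseteq> V" "B \<subseteq> V" using A B unfolding module_def by auto
  have sym: "col x y = col y x" if "x \<in> V" "y \<in> V" "x \<noteq> y" for x y
    using \<open>ceg V col\<close> that unfolding ceg_def by blast
  have "col u v = col a v"
    using A \<open>u \<in> A\<close> \<open>a \<in> A\<close> \<open>v \<in> B\<close> \<open>B \<subseteq> V\<close> \<open>A \<inter> B = {}\<close> unfolding module_def by blast
  also have "\<dots> = col v a"
    using sym \<open>a \<in> A\<close> \<open>v \<in> B\<close> \<open>A \<subseteq> V\<close> \<open>B \<subseteq> V\<close> \<open>A \<inter> B = {}\<close> by blast
  also have "\<dots> = col b a"
    using B \<open>v \<in> B\<close> \<open>b \<in> B\<close> \<open>a \<in> A\<close> \<open>A \<subseteq> V\<close> \<open>A \<inter> B = {}\<close> unfolding module_def by blast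
  also have "\<dots> = col a b"
    using sym \<open>a \<in> A\<close> \<open>b \<in> B\<close> \<open>A \<subseteq> V\<close> \<open>B \<subseteq> V\<close> \<open>A \<inter> B = {}\<close> by blast
  finally show ?thesis unfolding quot_col_def a_def b_def .
qed

lemma Pmax_perm_realizer:
  assumes "finite V" and M: "strong_module V col M" and two: "2 \<le> card M"
    and prime: "prime_module V col M \<Longrightarrow> cecpg (quot_vertices V col M) (quot_col col)"
  shows "\<exists>LQ PQ. perm_realizer (Pmax V col M) (quot_col col) LQ PQ"
proof (cases "prime_module V col M")
  case True
  then have "cecpg (Pmax V col M) (quot_col col)"
    using prime two unfolding quot_vertices_def by simp
  then show ?thesis by (rule cecpg_imp_perm_realizer)
next
  case False
  have "M \<subseteq> V" using M unfolding strong_module_def module_def by blast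
  then have "finite M" using \<open>finite V\<close> by (rule finite_subset)
  then have fin_Q: "finite (Pmax V col M)" using partition_on_Pmax[OF assms(1-3)] by (rule finite_elements)
  have "card (colors (Pmax V col M) (quot_col col)) = 1"
    using False M two unfolding prime_module_def series_module_def quot_vertices_def by simp
  then obtain c where "colors (Pmax V col M) (quot_col col) = {c}" by (rule card_1_singletonE)
  with fin_Q show ?thesis by (intro perm_realizer_monochromatic) simp_all
qed

lemma strong_module_perm_realizer:
  assumes cg: "ceg V col"
    and prime: "\<And>M. prime_module V col M \<Longrightarrow> cecpg (quot_vertices V col M) (quot_col col)"
    and "strong_module V col M"
  shows "\<exists>l p. perm_realizer M col l p"
  using \<open>strong_module V col M\<close>
proof (induction "card M" arbitrary: M rule: less_induct)
  case less
  have "finite V" using cg unfolding ceg_def by blast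
  have "M \<subseteq> V" and "M \<noteq> {}" using less.prems unfolding strong_module_def module_def by auto
  then have "finite M" using \<open>finite V\<close> finite_subset by blast
  show ?case
  proof (cases "2 \<le> card M")
    case False
    moreover have "0 < card M" using \<open>finite M\<close> \<open>M \<noteq> {}\<close> by (simp add: card_gt_0_iff)
    ultimately have "card M = 1" by linarith
    then obtain x where "M = {x}" by (rule card_1_singletonE)
    then have "perm_realizer M col (\<lambda>_. 0) (\<lambda>_ _. 0)" unfolding perm_realizer_def by simp
    then show ?thesis by blast
  next
    case True
    define Q where "Q = Pmax V col M"
    have Q: "partition_on M Q"
      unfolding Q_def using partition_on_Pmax[OF \<open>finite V\<close> less.prems True] .
    obtain LQ PQ where quot: "perm_realizer Q (quot_col col) LQ PQ"
      using Pmax_perm_realizer[OF \<open>finite V\<close> less.prems True prime] unfolding Q_def by blast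
    have sub: "strong_module V col A" "A \<subset> M" if "A \<in> Q" for A
      using that unfolding Q_def Pmax_def by auto
    have blocks: "\<exists>l p. perm_realizer A col l p" if "A \<in> Q" for A
      using less.hyps[OF psubset_card_mono[OF \<open>finite M\<close> sub(2)[OF that]] sub(1)[OF that]] .
    have between: "col u v = quot_col col A B"
      if "A \<in> Q" "B \<in> Q" "A \<noteq> B" "u \<in> A" "v \<in> B" for A B u v
      using module_col_eq_quot_col[OF cg] sub that partition_onD2[OF Q]
      unfolding strong_module_def disjoint_def by blast
    show ?thesis using perm_realizer_substitute[OF Q \<open>finite M\<close> quot blocks between] .
  qed
qed

theorem proposition4p10:
  fixes V :: "'a set" and col :: "'a \<Rightarrow> 'a \<Rightarrow> 'c"
  assumes "ceg V col"
    and "\<And>M. prime_module V col M \<Longrightarrow>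
           cecpg (quot_vertices V col M) (quot_col col)"
  shows "cecpg V col"
proof -
  have "finite V" and "strong_module V col V"
    using assms(1) unfolding ceg_def strong_module_def module_def by auto
  then obtain l p where "perm_realizer V col l p"
    using strong_module_perm_realizer[OF assms \<open>strong_module V col V\<close>] by blast
  with \<open>finite V\<close> show ?thesis by (rule perm_realizer_imp_cecpg)
qed

end
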